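(* Fix a real number $\tau\neq 0$ and consider the following linear operators on smooth functions $\Phi(x,t)$: $$H=\partial_t,\quad P=\partial_x,\quad K=-x\,\frac{e^{\tau\partial_t}-1}{\tau}-t\,e^{-\tau\partial_t}\partial_x,\quad D=-x\partial_x-t\,\frac{1-e^{-\tau\partial_t}}{\tau},$$ $$C_1=(x^2+t^2e^{-\tau\partial_t})\frac{e^{\tau\partial_t}-1}{\tau}+2xt\partial_x+\tau x\partial_x+\tau x^2\partial_x^2,$$ $$C_2=-(x^2+t^2e^{-2\tau\partial_t})\partial_x-2xt\,\frac{1-e^{-\tau\partial_t}}{\tau}+\tau t\,e^{-2\tau\partial_t}\partial_x,$$ where $e^{a\tau\partial_t}$ denotes the shift operator $\Phi(x,t)\mapsto\Phi(x,t+a\tau)$ and, in expressions involving $e^{\pm\tau H}$, $e^{\pm\tau H}$ is interpreted as $e^{\pm\tau\partial_t}$. Then these operators satisfy the commutation relations $[K,H]=e^{-\tau H}P$, $[K,P]=(e^{\tau H}-1)/\tau$, $[H,P]=0$, $[D,H]=(1-e^{-\tau H})/\tau$, $[D,C_1]=-C_1+\tau D^2$, $[H,C_1]=-2D$, $[D,P]=P$, $[D,C_2]=-C_2$, $[P,C_2]=2D$, $[K,C_1]=C_2$, $[K,C_2]=C_1-\tau D^2$, $[C_1,C_2]=-\tau(DC_2+C_2D)$, $[H,C_2]=e^{-\tau H}K+Ke^{-\tau H}$, $[P,C_1]=-2K-\tau(DP+PD)$, $[K,D]=0$, i.e. they give a representation of the algebra $U_\tau(so(2,2))$. As $\tau\to0$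 they reduce to the vector fields $H=\partial_t$, $P=\partial_x$, $K=-t\partial_x-x\partial_t$, $D=-x\partial_x-t\partial_t$, $C_1=(x^2+t^2)\partial_t+2xt\partial_x$, $C_2=-(x^2+t^2)\partial_x-2xt\partial_t$.
   Context: Here $(e^{\tau\partial_t}-1)/\tau$ and $(1-e^{-\tau\partial_t})/\tau$ are the forward and backward difference operators in $t$ with step $\tau$; all products are compositions of operators, with multiplication operators by $x$, $t$ understood. *)

theory Defs
  imports "HOL-Analysis.Analysis"
begin

type_synonym fn2 = "real \<Rightarrow> real \<Rightarrow> real"
type_synonym op2 = "fn2 \<Rightarrow> fn2"

definition oadd :: "op2 \<Rightarrow> op2 \<Rightarrow> op2" where
  "oadd A B = (\<lambda>f x t. A f x t + B f x t)"
definition osub :: "op2 \<Rightarrow> op2 \<Rightarrow> op2" where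
  "osub A B = (\<lambda>f x t. A f x t - B f x t)"
definition oscale :: "real \<Rightarrow> op2 \<Rightarrow> op2" where
  "oscale c A = (\<lambda>f x t. c * A f x t)"
definition ozero :: op2 where
  "ozero = (\<lambda>f x t. 0)"
definition comm :: "op2 \<Rightarrow> op2 \<Rightarrow> op2" where
  "comm A B = osub (A \<circ> B) (B \<circ> A)"

definition pdx :: op2 where
  "pdx f = (\<lambda>x t. deriv (\<lambda>y. f y t) x)"
definition pdt :: op2 where
  "pdt f = (\<lambda>x t. deriv (\<lambda>s. f x s) t)"
definition mulx :: op2 where
  "mulx f = (\<lambda>x t. x * f x t)"
definition mult :: op2 where
  "mult f = (\<lambda>x t. t * f x t)"
text \<open>shift a: Phi(x,t) maps to Phi(x,t+a); so e^(c tau d_t) = shift (c*tau).\<close>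
definition shift :: "real \<Rightarrow> op2" where
  "shift a f = (\<lambda>x t. f x (t + a))"

definition fwd :: "real \<Rightarrow> op2" where
  "fwd \<tau> = oscale (1 / \<tau>) (osub (shift \<tau>) id)"
definition bwd :: "real \<Rightarrow> op2" where
  "bwd \<tau> = oscale (1 / \<tau>) (osub id (shift (- \<tau>)))"

text \<open>Smoothness: every iterated partial derivative is (jointly, Frechet) differentiable
  everywhere on R^2, i.e. Phi is C-infinity.\<close>
fun iter_pd :: "bool list \<Rightarrow> op2" where
  "iter_pd [] f = f"
| "iter_pd (b # bs) f = (if b then pdx else pdt) (iter_pd bs f)"

definition smooth2 :: "fn2 \<Rightarrow> bool" where
  "smooth2 f \<longleftrightarrow> (\<forall>bs x t. (\<lambda>(y, s). iter_pd bs f y s) differentiable (at (x, t)))"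

definition opH :: op2 where "opH = pdt"
definition opP :: op2 where "opP = pdx"
definition opK :: "real \<Rightarrow> op2" where
  "opK \<tau> = osub (oscale (-1) (mulx \<circ> fwd \<tau>)) (mult \<circ> shift (- \<tau>) \<circ> pdx)"
definition opD :: "real \<Rightarrow> op2" where
  "opD \<tau> = osub (oscale (-1) (mulx \<circ> pdx)) (mult \<circ> bwd \<tau>)"
definition opC1 :: "real \<Rightarrow> op2" where
  "opC1 \<tau> = oadd (oadd (oadd
      (oadd (mulx \<circ> mulx) (mult \<circ> mult \<circ> shift (- \<tau>)) \<circ> fwd \<tau>)
      (oscale 2 (mulx \<circ> mult \<circ> pdx)))
      (oscale \<tau> (mulx \<circ> pdx)))
      (oscale \<tau> (mulx \<circ> mulx \<circ> pdx \<circ> pdx))"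
definition opC2 :: "real \<Rightarrow> op2" where
  "opC2 \<tau> = oadd (osub
      (oscale (-1) (oadd (mulx \<circ> mulx) (mult \<circ> mult \<circ> shift (- 2 * \<tau>)) \<circ> pdx))
      (oscale 2 (mulx \<circ> mult \<circ> bwd \<tau>)))
      (oscale \<tau> (mult \<circ> shift (- 2 * \<tau>) \<circ> pdx))"

definition opK0 :: op2 where "opK0 = osub (oscale (-1) (mult \<circ> pdx)) (mulx \<circ> pdt)"
definition opD0 :: op2 where "opD0 = osub (oscale (-1) (mulx \<circ> pdx)) (mult \<circ> pdt)"
definition opC10 :: op2 where
  "opC10 = oadd (oadd (mulx \<circ> mulx) (mult \<circ> mult) \<circ> pdt) (oscale 2 (mulx \<circ> mult \<circ> pdx))"
definition opC20 :: op2 where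
  "opC20 = osub (oscale (-1) (oadd (mulx \<circ> mulx) (mult \<circ> mult) \<circ> pdx)) (oscale 2 (mulx \<circ> mult \<circ> pdt))"

end

theory Submission
  imports Defs
begin

text \<open>All the operators are noncommutative polynomials in the multiplications by \<open>x\<close> and \<open>t\<close>,
  the shifts \<open>e\<^bsup>a\<partial>\<^sub>t\<^esup>\<close> and the partial derivatives. On smooth functions these generators
  satisfy \<open>[\<partial>\<^sub>x, x] = 1\<close>, \<open>[\<partial>\<^sub>t, t] = 1\<close>, \<open>e\<^bsup>a\<partial>\<^sub>t\<^esup> t = (t + a) e\<^bsup>a\<partial>\<^sub>t\<^esup>\<close>, and all other pairs
  of them commute (for \<open>\<partial>\<^sub>x \<partial>\<^sub>t = \<partial>\<^sub>t \<partial>\<^sub>x\<close> this is Schwarz's theorem). Pushing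
  all derivatives and shifts through to \<open>\<Phi>\<close> with these rules turns each commutation relation
  into an identity between rational expressions in \<open>x\<close>, \<open>t\<close>, \<open>\<tau>\<close> whose coefficients are values of
  shifted derivatives of \<open>\<Phi>\<close>. As \<open>\<tau> \<rightarrow> 0\<close> the difference quotients tend to \<open>\<partial>\<^sub>t\<Phi>\<close> and the shifts
  to the identity, which gives the vector-field limits.\<close>

definition fadd :: "fn2 \<Rightarrow> fn2 \<Rightarrow> fn2" where "fadd f g = (\<lambda>x t. f x t + g x t)"
definition fsub :: "fn2 \<Rightarrow> fn2 \<Rightarrow> fn2" where "fsub f g = (\<lambda>x t. f x t - g x t)"
definition fscale :: "real \<Rightarrow> fn2 \<Rightarrow> fn2" where "fscale c f = (\<lambda>x t. c * f x t)"

definition differentiable2 :: "fn2 \<Rightarrow> bool" where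
  "differentiable2 h \<longleftrightarrow> (\<forall>x t. (\<lambda>(y, s). h y s) differentiable (at (x, t)))"

lemma differentiable2_iff:
  "differentiable2 h \<longleftrightarrow> (\<forall>p. (\<lambda>p. h (fst p) (snd p)) differentiable (at p))"
  by (simp add: differentiable2_def case_prod_beta' del: split_paired_All) (metis prod.collapse)

lemma differentiable2_has_pdx:
  assumes "differentiable2 h" shows "((\<lambda>y. h y t) has_real_derivative pdx h x t) (at x)"
proof -
  have "(\<lambda>y. (\<lambda>(y, s). h y s) ((\<lambda>y. (y, t)) y)) differentiable at x"
    by (rule differentiable_compose[where f="\<lambda>(y, s). h y s"])
       (use assms in \<open>auto simp: differentiable2_def\<close>)
  then show ?thesis by (simp add: pdx_def DERIV_deriv_iff_real_differentiable)
qed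

lemma differentiable2_has_pdt:
  assumes "differentiable2 h" shows "((\<lambda>s. h x s) has_real_derivative pdt h x t) (at t)"
proof -
  have "(\<lambda>s. (\<lambda>(y, s). h y s) ((\<lambda>s. (x, s)) s)) differentiable at t"
    by (rule differentiable_compose[where f="\<lambda>(y, s). h y s"])
       (use assms in \<open>auto simp: differentiable2_def\<close>)
  then show ?thesis by (simp add: pdt_def DERIV_deriv_iff_real_differentiable)
qed

lemma differentiable2_imp_isCont:
  "differentiable2 h \<Longrightarrow> isCont (\<lambda>p. h (fst p) (snd p)) p"
  unfolding differentiable2_iff by (blast intro: differentiable_imp_continuous_within)

lemma differentiable2_fadd: "differentiable2 f \<Longrightarrow> differentiable2 g \<Longrightarrow> differentiable2 (fadd f g)"
  unfolding differentiable2_iff fadd_def by (intro allI differentiable_add) blast+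

lemma differentiable2_fscale: "differentiable2 f \<Longrightarrow> differentiable2 (fscale c f)"
  unfolding differentiable2_iff fscale_def by (intro allI differentiable_mult differentiable_const) blast

lemma differentiable2_mulx: "differentiable2 f \<Longrightarrow> differentiable2 (mulx f)"
  unfolding differentiable2_iff mulx_def
  by (intro allI differentiable_mult[OF bounded_linear_imp_differentiable[OF bounded_linear_fst]]) blast

lemma differentiable2_mult: "differentiable2 f \<Longrightarrow> differentiable2 (mult f)"
  unfolding differentiable2_iff mult_def
  by (intro allI differentiable_mult[OF bounded_linear_imp_differentiable[OF bounded_linear_snd]]) blast

lemma differentiable2_shift: "differentiable2 f \<Longrightarrow> differentiable2 (shift a f)"
  unfolding differentiable2_iff shift_def
proof
  fix p :: "real \<times> real"
  assume "\<forall>p. (\<lambda>p. f (fst p) (snd p)) differentiable at p"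
  then have "(\<lambda>q. f (fst q) (snd q)) \<circ> (\<lambda>p. p + (0, a)) differentiable at p"
    by (intro differentiable_chain_at differentiable_add differentiable_ident differentiable_const) blast
  then show "(\<lambda>p. f (fst p) (snd p + a)) differentiable at p" by (simp add: comp_def)
qed

lemma pdx_eqI: "(\<And>x t. ((\<lambda>y. h y t) has_real_derivative h' x t) (at x)) \<Longrightarrow> pdx h = h'"
  unfolding pdx_def by (intro ext DERIV_imp_deriv)

lemma pdt_eqI: "(\<And>x t. ((\<lambda>s. h x s) has_real_derivative h' x t) (at t)) \<Longrightarrow> pdt h = h'"
  unfolding pdt_def by (intro ext DERIV_imp_deriv)

lemma pdx_fadd: "differentiable2 f \<Longrightarrow> differentiable2 g \<Longrightarrow> pdx (fadd f g) = fadd (pdx f) (pdx g)"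
  by (rule pdx_eqI) (auto simp: fadd_def intro!: derivative_eq_intros differentiable2_has_pdx)

lemma pdt_fadd: "differentiable2 f \<Longrightarrow> differentiable2 g \<Longrightarrow> pdt (fadd f g) = fadd (pdt f) (pdt g)"
  by (rule pdt_eqI) (auto simp: fadd_def intro!: derivative_eq_intros differentiable2_has_pdt)

lemma pdx_fsub: "differentiable2 f \<Longrightarrow> differentiable2 g \<Longrightarrow> pdx (fsub f g) = fsub (pdx f) (pdx g)"
  by (rule pdx_eqI) (auto simp: fsub_def intro!: derivative_eq_intros differentiable2_has_pdx)

lemma pdt_fsub: "differentiable2 f \<Longrightarrow> differentiable2 g \<Longrightarrow> pdt (fsub f g) = fsub (pdt f) (pdt g)"
  by (rule pdt_eqI) (auto simp: fsub_def intro!: derivative_eq_intros differentiable2_has_pdt)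

lemma pdx_fscale: "differentiable2 f \<Longrightarrow> pdx (fscale c f) = fscale c (pdx f)"
  by (rule pdx_eqI) (auto simp: fscale_def intro!: derivative_eq_intros differentiable2_has_pdx)

lemma pdt_fscale: "differentiable2 f \<Longrightarrow> pdt (fscale c f) = fscale c (pdt f)"
  by (rule pdt_eqI) (auto simp: fscale_def intro!: derivative_eq_intros differentiable2_has_pdt)

lemma pdx_mulx: "differentiable2 f \<Longrightarrow> pdx (mulx f) = fadd f (mulx (pdx f))"
  by (rule pdx_eqI) (auto simp: fadd_def mulx_def intro!: derivative_eq_intros differentiable2_has_pdx)

lemma pdt_mulx: "differentiable2 f \<Longrightarrow> pdt (mulx f) = mulx (pdt f)"
  by (rule pdt_eqI) (auto simp: mulx_def intro!: derivative_eq_intros differentiable2_has_pdt)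

lemma pdx_mult: "differentiable2 f \<Longrightarrow> pdx (mult f) = mult (pdx f)"
  by (rule pdx_eqI) (auto simp: mult_def intro!: derivative_eq_intros differentiable2_has_pdx)

lemma pdt_mult: "differentiable2 f \<Longrightarrow> pdt (mult f) = fadd f (mult (pdt f))"
  by (rule pdt_eqI) (auto simp: fadd_def mult_def intro!: derivative_eq_intros differentiable2_has_pdt)

lemma pdx_shift: "pdx (shift a f) = shift a (pdx f)"
  by (simp add: pdx_def shift_def)

lemma pdt_shift: "pdt (shift a f) = shift a (pdt f)"
proof -
  have "deriv (\<lambda>s. g (s + a)) t = deriv g (t + a)" for g :: "real \<Rightarrow> real" and t
    unfolding deriv_def by (simp add: DERIV_shift)
  then show ?thesis by (simp add: pdt_def shift_def)
qed

text \<open>The smooth functions form the largest class of jointly differentiable functions closed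
  under both partial derivatives, so a closure property of \<^const>\<open>smooth2\<close> is proved by exhibiting a
  class of functions that contains the new function and is closed in this sense.\<close>

lemma smooth2_coinduct:
  assumes "f \<in> S" and "\<And>g. g \<in> S \<Longrightarrow> differentiable2 g \<and> pdx g \<in> S \<and> pdt g \<in> S"
  shows "smooth2 f"
proof -
  have "iter_pd bs f \<in> S" for bs
    by (induction bs) (use assms in auto)
  then show ?thesis
    using assms(2) by (simp add: smooth2_def differentiable2_def)
qed

lemma iter_pd_pdx: "iter_pd bs (pdx f) = iter_pd (bs @ [True]) f"
  by (induction bs) auto

lemma iter_pd_pdt: "iter_pd bs (pdt f) = iter_pd (bs @ [False]) f"
  by (induction bs) auto

lemma smooth2_differentiable2: "smooth2 f \<Longrightarrow> differentiable2 f"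
  unfolding smooth2_def differentiable2_def by (metis iter_pd.simps(1))

lemma smooth2_pdx: "smooth2 f \<Longrightarrow> smooth2 (pdx f)"
  unfolding smooth2_def iter_pd_pdx by blast

lemma smooth2_pdt: "smooth2 f \<Longrightarrow> smooth2 (pdt f)"
  unfolding smooth2_def iter_pd_pdt by blast

lemma smooth2_fadd:
  assumes "smooth2 f" and "smooth2 g" shows "smooth2 (fadd f g)"
proof -
  let ?S = "{fadd f g | f g. smooth2 f \<and> smooth2 g}"
  have "differentiable2 h \<and> pdx h \<in> ?S \<and> pdt h \<in> ?S" if "h \<in> ?S" for h
  proof -
    from that obtain f g where "h = fadd f g" "smooth2 f" "smooth2 g" by blast
    then show ?thesis
      by (simp add: pdx_fadd pdt_fadd smooth2_differentiable2 differentiable2_fadd)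
         (blast intro: smooth2_pdx smooth2_pdt)
  qed
  with assms show ?thesis by (intro smooth2_coinduct[of _ ?S]) blast+
qed

lemma smooth2_fscale:
  assumes "smooth2 f" shows "smooth2 (fscale c f)"
proof -
  let ?S = "{fscale c f | f. smooth2 f}"
  have "differentiable2 h \<and> pdx h \<in> ?S \<and> pdt h \<in> ?S" if "h \<in> ?S" for h
  proof -
    from that obtain f where "h = fscale c f" "smooth2 f" by blast
    then show ?thesis
      by (simp add: pdx_fscale pdt_fscale smooth2_differentiable2 differentiable2_fscale)
         (blast intro: smooth2_pdx smooth2_pdt)
  qed
  with assms show ?thesis by (intro smooth2_coinduct[of _ ?S]) blast+
qed

lemma smooth2_fsub:
  assumes "smooth2 f" and "smooth2 g" shows "smooth2 (fsub f g)"
proof -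
  have "fsub f g = fadd f (fscale (-1) g)" by (simp add: fsub_def fadd_def fscale_def)
  then show ?thesis using assms by (simp add: smooth2_fadd smooth2_fscale)
qed

lemma smooth2_mulx:
  assumes "smooth2 f" shows "smooth2 (mulx f)"
proof -
  let ?S = "{fadd (mulx f) g | f g. smooth2 f \<and> smooth2 g}"
  have "differentiable2 h \<and> pdx h \<in> ?S \<and> pdt h \<in> ?S" if "h \<in> ?S" for h
  proof -
    from that obtain f g where h: "h = fadd (mulx f) g" and fg: "smooth2 f" "smooth2 g" by blast
    then have d: "differentiable2 f" "differentiable2 g" by (simp_all add: smooth2_differentiable2)
    have "pdx h = fadd (mulx (pdx f)) (fadd f (pdx g))"
      using d by (simp add: h pdx_fadd pdx_mulx differentiable2_mulx) (simp add: fadd_def add_ac)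
    moreover have "pdt h = fadd (mulx (pdt f)) (pdt g)"
      using d by (simp add: h pdt_fadd pdt_mulx differentiable2_mulx)
    ultimately show ?thesis
      using fg d by (auto simp: h intro!: differentiable2_fadd differentiable2_mulx
                                smooth2_fadd smooth2_pdx smooth2_pdt)
  qed
  moreover have "mulx f \<in> ?S"
  proof -
    have "mulx f = fadd (mulx f) (fscale 0 f)" by (simp add: fadd_def fscale_def)
    then show ?thesis using assms smooth2_fscale[OF assms] by blast
  qed
  ultimately show ?thesis using smooth2_coinduct[of "mulx f" ?S] by blast
qed

lemma smooth2_mult:
  assumes "smooth2 f" shows "smooth2 (mult f)"
proof -
  let ?S = "{fadd (mult f) g | f g. smooth2 f \<and> smooth2 g}"
  have "differentiable2 h \<and> pdx h \<in> ?S \<and> pdt h \<in> ?S" if "h \<in> ?S" for h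
  proof -
    from that obtain f g where h: "h = fadd (mult f) g" and fg: "smooth2 f" "smooth2 g" by blast
    then have d: "differentiable2 f" "differentiable2 g" by (simp_all add: smooth2_differentiable2)
    have "pdx h = fadd (mult (pdx f)) (pdx g)"
      using d by (simp add: h pdx_fadd pdx_mult differentiable2_mult)
    moreover have "pdt h = fadd (mult (pdt f)) (fadd f (pdt g))"
      using d by (simp add: h pdt_fadd pdt_mult differentiable2_mult) (simp add: fadd_def add_ac)
    ultimately show ?thesis
      using fg d by (auto simp: h intro!: differentiable2_fadd differentiable2_mult
                                smooth2_fadd smooth2_pdx smooth2_pdt)
  qed
  moreover have "mult f \<in> ?S"
  proof -
    have "mult f = fadd (mult f) (fscale 0 f)" by (simp add: fadd_def fscale_def)
    then show ?thesis using assms smooth2_fscale[OF assms] by blast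
  qed
  ultimately show ?thesis using smooth2_coinduct[of "mult f" ?S] by blast
qed

lemma smooth2_shift:
  assumes "smooth2 f" shows "smooth2 (shift a f)"
proof -
  let ?S = "{shift a f | f. smooth2 f}"
  have "differentiable2 h \<and> pdx h \<in> ?S \<and> pdt h \<in> ?S" if "h \<in> ?S" for h
  proof -
    from that obtain f where "h = shift a f" "smooth2 f" by blast
    then show ?thesis
      by (simp add: pdx_shift pdt_shift smooth2_differentiable2 differentiable2_shift)
         (blast intro: smooth2_pdx smooth2_pdt)
  qed
  with assms show ?thesis by (intro smooth2_coinduct[of _ ?S]) blast+
qed

text \<open>Schwarz's theorem: the mean value theorem, applied in either order to the mixed second
  difference \<open>\<Delta>\<close> over a square of side \<open>h\<close>, produces two points of the square at which the
  two mixed partials agree; letting \<open>h \<rightarrow> 0\<close> and using continuity gives equality at the corner.\<close>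

lemma mixed_difference_mean_value:
  fixes f fx ft fxt ftx :: fn2
  assumes fx: "\<And>x t. ((\<lambda>y. f y t) has_real_derivative fx x t) (at x)"
    and ft: "\<And>x t. ((\<lambda>s. f x s) has_real_derivative ft x t) (at t)"
    and fxt: "\<And>x t. ((\<lambda>s. fx x s) has_real_derivative fxt x t) (at t)"
    and ftx: "\<And>x t. ((\<lambda>y. ft y t) has_real_derivative ftx x t) (at x)"
    and h: "h > 0"
  obtains a b a' b' where "a \<in> {x<..<x + h}" "b \<in> {t<..<t + h}" "a' \<in> {x<..<x + h}" "b' \<in> {t<..<t + h}"
    and "fxt a b = ftx a' b'"
proof -
  define \<Delta> where "\<Delta> = f (x + h) (t + h) - f (x + h) t - f x (t + h) + f x t"
  have "\<exists>z>x. z < x + h \<and> (\<lambda>y. f y (t + h) - f y t) (x + h) - (\<lambda>y. f y (t + h) - f y t) x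
      = (x + h - x) * (fx z (t + h) - fx z t)"
    using h by (intro MVT2) (auto intro!: derivative_eq_intros fx)
  then obtain a where a: "a \<in> {x<..<x + h}" "\<Delta> = h * (fx a (t + h) - fx a t)"
    by (auto simp: \<Delta>_def algebra_simps)
  have "\<exists>z>t. z < t + h \<and> fx a (t + h) - fx a t = (t + h - t) * fxt a z"
    using h by (intro MVT2) (auto intro!: fxt)
  then obtain b where b: "b \<in> {t<..<t + h}" "fx a (t + h) - fx a t = h * fxt a b" by auto
  have "\<exists>z>t. z < t + h \<and> (\<lambda>s. f (x + h) s - f x s) (t + h) - (\<lambda>s. f (x + h) s - f x s) t
      = (t + h - t) * (ft (x + h) z - ft x z)"
    using h by (intro MVT2) (auto intro!: derivative_eq_intros ft)
  then obtain b' where b': "b' \<in> {t<..<t + h}" "\<Delta> = h * (ft (x + h) b' - ft x b')"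
    by (auto simp: \<Delta>_def algebra_simps)
  have "\<exists>z>x. z < x + h \<and> ft (x + h) b' - ft x b' = (x + h - x) * ftx z b'"
    using h by (intro MVT2) (auto intro!: ftx)
  then obtain a' where a': "a' \<in> {x<..<x + h}" "ft (x + h) b' - ft x b' = h * ftx a' b'" by auto
  have "h * (h * fxt a b) = h * (h * ftx a' b')" using a b a' b' by simp
  then have "fxt a b = ftx a' b'" using h by simp
  with a b a' b' that show ?thesis by blast
qed

lemma tendsto_at_right_0_squeezed:
  fixes x :: real
  assumes "\<And>h. h > 0 \<Longrightarrow> a h \<in> {x<..<x + h}"
  shows "(a \<longlongrightarrow> x) (at_right 0)"
proof (rule tendsto_sandwich[where f="\<lambda>h. x" and h="\<lambda>h. x + h"])
  have "\<forall>\<^sub>F h in at_right 0. a h \<in> {x<..<x + h}"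
    using eventually_at_right_less[of 0] by (rule eventually_mono) (rule assms)
  then show "\<forall>\<^sub>F h in at_right 0. x \<le> a h" "\<forall>\<^sub>F h in at_right 0. a h \<le> x + h"
    by (auto elim!: eventually_mono)
  show "((\<lambda>h. x + h) \<longlongrightarrow> x) (at_right 0)"
    by (auto intro!: tendsto_eq_intros)
qed simp

lemma mixed_partials_eq:
  fixes f fx ft fxt ftx :: fn2
  assumes "\<And>x t. ((\<lambda>y. f y t) has_real_derivative fx x t) (at x)"
    and "\<And>x t. ((\<lambda>s. f x s) has_real_derivative ft x t) (at t)"
    and "\<And>x t. ((\<lambda>s. fx x s) has_real_derivative fxt x t) (at t)"
    and "\<And>x t. ((\<lambda>y. ft y t) has_real_derivative ftx x t) (at x)"
    and fxt_cont: "isCont (\<lambda>p. fxt (fst p) (snd p)) (x, t)"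
    and ftx_cont: "isCont (\<lambda>p. ftx (fst p) (snd p)) (x, t)"
  shows "fxt x t = ftx x t"
proof -
  have "\<forall>h. \<exists>a b a' b'. h > 0 \<longrightarrow> a \<in> {x<..<x + h} \<and> b \<in> {t<..<t + h} \<and> a' \<in> {x<..<x + h}
      \<and> b' \<in> {t<..<t + h} \<and> fxt a b = ftx a' b'"
    using mixed_difference_mean_value[OF assms(1-4)] by metis
  then obtain a b a' b' where ab: "\<And>h. h > 0 \<Longrightarrow> a h \<in> {x<..<x + h} \<and> b h \<in> {t<..<t + h}
      \<and> a' h \<in> {x<..<x + h} \<and> b' h \<in> {t<..<t + h} \<and> fxt (a h) (b h) = ftx (a' h) (b' h)"
    by metis
  have "((\<lambda>h. fxt (a h) (b h)) \<longlongrightarrow> fxt x t) (at_right 0)"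
    using isCont_tendsto_compose[OF fxt_cont, of "\<lambda>h. (a h, b h)"] ab
    by (simp add: tendsto_Pair tendsto_at_right_0_squeezed)
  moreover have "((\<lambda>h. fxt (a h) (b h)) \<longlongrightarrow> ftx x t) (at_right 0)"
  proof (rule tendsto_cong[THEN iffD1])
    show "\<forall>\<^sub>F h in at_right 0. ftx (a' h) (b' h) = fxt (a h) (b h)"
      using eventually_at_right_less[of 0] by (rule eventually_mono) (simp add: ab)
    show "((\<lambda>h. ftx (a' h) (b' h)) \<longlongrightarrow> ftx x t) (at_right 0)"
      using isCont_tendsto_compose[OF ftx_cont, of "\<lambda>h. (a' h, b' h)"] ab
      by (simp add: tendsto_Pair tendsto_at_right_0_squeezed)
  qed
  ultimately show ?thesis
    by (rule tendsto_unique[rotated]) simp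
qed

lemma pdt_pdx_commute:
  assumes "smooth2 f" shows "pdt (pdx f) = pdx (pdt f)"
proof (intro ext)
  fix x t
  have "differentiable2 f" "differentiable2 (pdx f)" "differentiable2 (pdt f)"
    "differentiable2 (pdt (pdx f))" "differentiable2 (pdx (pdt f))"
    using assms by (simp_all add: smooth2_differentiable2 smooth2_pdx smooth2_pdt)
  then show "pdt (pdx f) x t = pdx (pdt f) x t"
    by (intro mixed_partials_eq[where f=f and fx="pdx f" and ft="pdt f"])
       (simp_all add: differentiable2_has_pdx differentiable2_has_pdt differentiable2_imp_isCont)
qed

lemma operator_apply:
  "oadd A B f = fadd (A f) (B f)" "osub A B f = fsub (A f) (B f)" "oscale c A f = fscale c (A f)"
  "comm A B f = fsub (A (B f)) (B (A f))"
  by (simp_all add: oadd_def fadd_def osub_def fsub_def oscale_def fscale_def comm_def)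

lemma difference_apply:
  "fwd \<tau> f = fscale (1 / \<tau>) (fsub (shift \<tau> f) f)"
  "bwd \<tau> f = fscale (1 / \<tau>) (fsub f (shift (- \<tau>) f))"
  by (simp_all add: fwd_def bwd_def osub_def fsub_def oscale_def fscale_def)

lemma fun_ops_apply:
  "fadd f g x t = f x t + g x t" "fsub f g x t = f x t - g x t" "fscale c f x t = c * f x t"
  "mulx f x t = x * f x t" "mult f x t = t * f x t"
  by (simp_all add: fadd_def fsub_def fscale_def mulx_def mult_def)

lemma shift_apply: "shift a f x t = f x (t + a)"
  by (simp add: shift_def)

lemmas smooth2_closed =
  smooth2_differentiable2 smooth2_pdx smooth2_pdt smooth2_fadd smooth2_fsub smooth2_fscale
  smooth2_mulx smooth2_mult smooth2_shift

lemmas partial_derivative_rules =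
  pdx_fadd pdt_fadd pdx_fsub pdt_fsub pdx_fscale pdt_fscale pdx_mulx pdt_mulx pdx_mult pdt_mult
  pdx_shift pdt_shift pdt_pdx_commute

lemmas operator_defs = opH_def opP_def opK_def opD_def opC1_def opC2_def

lemma commutation_relations:
  fixes \<tau> :: real and \<Phi> :: fn2
  assumes "\<tau> \<noteq> 0" and "smooth2 \<Phi>"
  shows "(comm (opK \<tau>) opH \<Phi> = (shift (- \<tau>) \<circ> opP) \<Phi>)
    \<and> (comm (opK \<tau>) opP \<Phi> = fwd \<tau> \<Phi>)
    \<and> (comm opH opP \<Phi> = ozero \<Phi>)
    \<and> (comm (opD \<tau>) opH \<Phi> = bwd \<tau> \<Phi>)
    \<and> (comm (opD \<tau>) (opC1 \<tau>) \<Phi> = oadd (oscale (-1) (opC1 \<tau>)) (oscale \<tau> (opD \<tau> \<circ> opD \<tau>)) \<Phi>)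
    \<and> (comm opH (opC1 \<tau>) \<Phi> = oscale (-2) (opD \<tau>) \<Phi>)
    \<and> (comm (opD \<tau>) opP \<Phi> = opP \<Phi>)
    \<and> (comm (opD \<tau>) (opC2 \<tau>) \<Phi> = oscale (-1) (opC2 \<tau>) \<Phi>)
    \<and> (comm opP (opC2 \<tau>) \<Phi> = oscale 2 (opD \<tau>) \<Phi>)
    \<and> (comm (opK \<tau>) (opC1 \<tau>) \<Phi> = opC2 \<tau> \<Phi>)
    \<and> (comm (opK \<tau>) (opC2 \<tau>) \<Phi> = osub (opC1 \<tau>) (oscale \<tau> (opD \<tau> \<circ> opD \<tau>)) \<Phi>)
    \<and> (comm (opC1 \<tau>) (opC2 \<tau>) \<Phi> = oscale (- \<tau>) (oadd (opD \<tau> \<circ> opC2 \<tau>) (opC2 \<tau> \<circ> opD \<tau>)) \<Phi>)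
    \<and> (comm opH (opC2 \<tau>) \<Phi> = oadd (shift (- \<tau>) \<circ> opK \<tau>) (opK \<tau> \<circ> shift (- \<tau>)) \<Phi>)
    \<and> (comm opP (opC1 \<tau>) \<Phi> = osub (oscale (-2) (opK \<tau>)) (oscale \<tau> (oadd (opD \<tau> \<circ> opP) (opP \<circ> opD \<tau>))) \<Phi>)
    \<and> (comm (opK \<tau>) (opD \<tau>) \<Phi> = ozero \<Phi>)"
  using assms by (intro conjI ext)
    (simp_all add: operator_defs operator_apply difference_apply ozero_def partial_derivative_rules smooth2_closed
      fun_ops_apply shift_apply field_simps)

lemma shift_tendsto:
  assumes "differentiable2 g" and "(a \<longlongrightarrow> 0) F"
  shows "((\<lambda>s. shift (a s) g x t) \<longlongrightarrow> g x t) F"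
proof -
  have "((\<lambda>s. (x, t + a s)) \<longlongrightarrow> (x, t)) F"
    using assms(2) by (auto intro!: tendsto_eq_intros)
  from isCont_tendsto_compose[OF differentiable2_imp_isCont[OF assms(1)] this] show ?thesis
    by (simp add: shift_def)
qed

lemma fwd_tendsto_pdt:
  assumes "differentiable2 g" shows "((\<lambda>s. fwd s g x t) \<longlongrightarrow> pdt g x t) (at 0)"
  using differentiable2_has_pdt[OF assms, of x t]
  by (simp add: DERIV_def difference_apply fun_ops_apply shift_apply add.commute)

lemma bwd_tendsto_pdt:
  assumes "differentiable2 g" shows "((\<lambda>s. bwd s g x t) \<longlongrightarrow> pdt g x t) (at 0)"
proof -
  have "bwd s g x t = fwd (- s) g x t" for s
    by (simp add: difference_apply fun_ops_apply shift_apply algebra_simps)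
  moreover have "((\<lambda>s. fwd s g x t) \<longlongrightarrow> pdt g x t) (filtermap uminus (at 0))"
    using fwd_tendsto_pdt[OF assms] by (simp add: filtermap_at_minus)
  ultimately show ?thesis
    by (simp add: tendsto_compose_filtermap[symmetric] comp_def)
qed

lemma shift_fwd: "shift (- \<tau>) (fwd \<tau> f) = bwd \<tau> f"
  by (simp add: difference_apply fun_ops_apply shift_apply fun_eq_iff)

lemmas limit_rules = tendsto_eq_intros shift_tendsto fwd_tendsto_pdt bwd_tendsto_pdt

lemma opK_tendsto: "smooth2 \<Phi> \<Longrightarrow> ((\<lambda>s. opK s \<Phi> x t) \<longlongrightarrow> opK0 \<Phi> x t) (at 0)"
  unfolding opK_def opK0_def
  by (simp add: operator_apply fun_ops_apply shift_fwd)
     (auto intro!: limit_rules smooth2_closed)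

lemma opD_tendsto: "smooth2 \<Phi> \<Longrightarrow> ((\<lambda>s. opD s \<Phi> x t) \<longlongrightarrow> opD0 \<Phi> x t) (at 0)"
  unfolding opD_def opD0_def
  by (simp add: operator_apply fun_ops_apply shift_fwd)
     (auto intro!: limit_rules smooth2_closed)

lemma opC1_tendsto: "smooth2 \<Phi> \<Longrightarrow> ((\<lambda>s. opC1 s \<Phi> x t) \<longlongrightarrow> opC10 \<Phi> x t) (at 0)"
  unfolding opC1_def opC10_def
  by (simp add: operator_apply fun_ops_apply shift_fwd)
     (auto intro!: limit_rules smooth2_closed)

lemma opC2_tendsto: "smooth2 \<Phi> \<Longrightarrow> ((\<lambda>s. opC2 s \<Phi> x t) \<longlongrightarrow> opC20 \<Phi> x t) (at 0)"
  unfolding opC2_def opC20_def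
  by (simp add: operator_apply fun_ops_apply shift_fwd)
     (auto intro!: limit_rules smooth2_closed)

theorem mainTheorem4:
  fixes \<tau> :: real and \<Phi> :: fn2
  assumes "\<tau> \<noteq> 0" and "smooth2 \<Phi>"
  shows "(comm (opK \<tau>) opH \<Phi> = (shift (- \<tau>) \<circ> opP) \<Phi>)
    \<and> (comm (opK \<tau>) opP \<Phi> = fwd \<tau> \<Phi>)
    \<and> (comm opH opP \<Phi> = ozero \<Phi>)
    \<and> (comm (opD \<tau>) opH \<Phi> = bwd \<tau> \<Phi>)
    \<and> (comm (opD \<tau>) (opC1 \<tau>) \<Phi> = oadd (oscale (-1) (opC1 \<tau>)) (oscale \<tau> (opD \<tau> \<circ> opD \<tau>)) \<Phi>)
    \<and> (comm opH (opC1 \<tau>) \<Phi> = oscale (-2) (opD \<tau>) \<Phi>)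
    \<and> (comm (opD \<tau>) opP \<Phi> = opP \<Phi>)
    \<and> (comm (opD \<tau>) (opC2 \<tau>) \<Phi> = oscale (-1) (opC2 \<tau>) \<Phi>)
    \<and> (comm opP (opC2 \<tau>) \<Phi> = oscale 2 (opD \<tau>) \<Phi>)
    \<and> (comm (opK \<tau>) (opC1 \<tau>) \<Phi> = opC2 \<tau> \<Phi>)
    \<and> (comm (opK \<tau>) (opC2 \<tau>) \<Phi> = osub (opC1 \<tau>) (oscale \<tau> (opD \<tau> \<circ> opD \<tau>)) \<Phi>)
    \<and> (comm (opC1 \<tau>) (opC2 \<tau>) \<Phi> = oscale (- \<tau>) (oadd (opD \<tau> \<circ> opC2 \<tau>) (opC2 \<tau> \<circ> opD \<tau>)) \<Phi>)
    \<and> (comm opH (opC2 \<tau>) \<Phi> = oadd (shift (- \<tau>) \<circ> opK \<tau>) (opK \<tau> \<circ> shift (- \<tau>)) \<Phi>)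
    \<and> (comm opP (opC1 \<tau>) \<Phi> = osub (oscale (-2) (opK \<tau>)) (oscale \<tau> (oadd (opD \<tau> \<circ> opP) (opP \<circ> opD \<tau>))) \<Phi>)
    \<and> (comm (opK \<tau>) (opD \<tau>) \<Phi> = ozero \<Phi>)
    \<and> (\<forall>x t. ((\<lambda>s. opK s \<Phi> x t) \<longlongrightarrow> opK0 \<Phi> x t) (at 0))
    \<and> (\<forall>x t. ((\<lambda>s. opD s \<Phi> x t) \<longlongrightarrow> opD0 \<Phi> x t) (at 0))
    \<and> (\<forall>x t. ((\<lambda>s. opC1 s \<Phi> x t) \<longlongrightarrow> opC10 \<Phi> x t) (at 0))
    \<and> (\<forall>x t. ((\<lambda>s. opC2 s \<Phi> x t) \<longlongrightarrow> opC20 \<Phi> x t) (at 0))"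
  using commutation_relations[OF assms] opK_tendsto[OF assms(2)] opD_tendsto[OF assms(2)]
    opC1_tendsto[OF assms(2)] opC2_tendsto[OF assms(2)]
  by blast

end
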